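(* Let $k$ be a positive integer, $c\ge 2$ an integer, and $m=k(c^2-1)+1$. Then there exists a single-category instance $I$ with $m$ goods, cardinality constraint $k$, and some number $n$ of agents with $kn\ge m$, such that $$\frac{\text{OPT-USW}(I)}{\max_{\mathcal{A}\in \mathcal{C}_k(I)}\text{USW}(\mathcal{A})}\ge \frac{1}{2}\left(1+\sqrt{1+\frac{m-1}{k}}\right).$$
   Context: A single-category instance consists of $n$ agents and a set $M$ of $m$ indivisible goods; each agent $i$ has an additive utility function $u_i:2^M\to\mathbb{R}_{\ge 0}$ with $u_i(\emptyset)=0$ and $u_i(M)=1$. An allocation is a partition $(A_1,\dots,A_n)$ of $M$, agent $i$ receiving $A_i$. It is cardinal (for constraint $k$) if $|A_i|\le k$ for all $i$; $\mathcal{C}_k(I)$ is the set of cardinal allocations. $\text{USW}(\mathcal{A})=\sum_i u_i(A_i)$ and $\text{OPT-USW}(I)$ is its maximum over all allocations. *)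

theory Defs
  imports Main "HOL-Library.FuncSet" Complex_Main
begin

text \<open>A single-category instance with agents 0..<n and goods 0..<m is given by
  the values u i g of good g for agent i; utilities are additive.\<close>

definition valid_instance :: "nat \<Rightarrow> nat \<Rightarrow> (nat \<Rightarrow> nat \<Rightarrow> real) \<Rightarrow> bool" where
  "valid_instance n m u \<longleftrightarrow>
     (\<forall>i<n. (\<forall>g<m. u i g \<ge> 0) \<and> (\<Sum>g<m. u i g) = 1)"

definition util :: "(nat \<Rightarrow> nat \<Rightarrow> real) \<Rightarrow> nat \<Rightarrow> nat set \<Rightarrow> real" where
  "util u i S = (\<Sum>g\<in>S. u i g)"

text \<open>An allocation (partition of the goods among the agents) is represented by the
  map sending each good to the agent receiving it; agent i gets bundle i.\<close>
definition allocations :: "nat \<Rightarrow> nat \<Rightarrow> (nat \<Rightarrow> nat) set" where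
  "allocations n m = {0..<m} \<rightarrow>\<^sub>E {0..<n}"

definition bundle_of :: "nat \<Rightarrow> (nat \<Rightarrow> nat) \<Rightarrow> nat \<Rightarrow> nat set" where
  "bundle_of m a i = {g\<in>{0..<m}. a g = i}"

definition cardinal_allocations :: "nat \<Rightarrow> nat \<Rightarrow> nat \<Rightarrow> (nat \<Rightarrow> nat) set" where
  "cardinal_allocations n m k = {a \<in> allocations n m. \<forall>i<n. card (bundle_of m a i) \<le> k}"

definition USW :: "nat \<Rightarrow> nat \<Rightarrow> (nat \<Rightarrow> nat \<Rightarrow> real) \<Rightarrow> (nat \<Rightarrow> nat) \<Rightarrow> real" where
  "USW n m u a = (\<Sum>i<n. util u i (bundle_of m a i))"

definition OPT_USW :: "nat \<Rightarrow> nat \<Rightarrow> (nat \<Rightarrow> nat \<Rightarrow> real) \<Rightarrow> real" where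
  "OPT_USW n m u = Max (USW n m u ` allocations n m)"

definition max_cardinal_USW :: "nat \<Rightarrow> nat \<Rightarrow> nat \<Rightarrow> (nat \<Rightarrow> nat \<Rightarrow> real) \<Rightarrow> real" where
  "max_cardinal_USW n m k u = Max (USW n m u ` cardinal_allocations n m k)"

end

theory Submission
  imports Defs
begin

text \<open>Write s = k(c + 1) and d = c - 1, so that m = s d + 1. Agent i < d values the i-th
  block of s consecutive goods among 1, ..., m - 1 uniformly, and the remaining m agents value
  only good 0. Handing each block to its agent and good 0 to another agent gives welfare
  d + 1 = c. Under the constraint a block agent receives at most k goods of its block, worth
  k/s = 1/(c + 1), while the agents wanting good 0 share at most 1; so the constrained optimum
  lies between 1 and 2c/(c + 1), and the ratio is at least (c + 1)/2 = (1 + sqrt (1 + (m - 1)/k))/2.\<close>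

lemma finite_allocations: "finite (allocations n m)"
  unfolding allocations_def by (simp add: finite_PiE)

lemma finite_cardinal_allocations: "finite (cardinal_allocations n m k)"
  by (rule finite_subset[OF _ finite_allocations]) (auto simp: cardinal_allocations_def)

lemma USW_le_OPT_USW: "a \<in> allocations n m \<Longrightarrow> USW n m u a \<le> OPT_USW n m u"
  unfolding OPT_USW_def using finite_allocations by (intro Max_ge) auto

lemma USW_le_max_cardinal_USW:
  "a \<in> cardinal_allocations n m k \<Longrightarrow> USW n m u a \<le> max_cardinal_USW n m k u"
  unfolding max_cardinal_USW_def using finite_cardinal_allocations by (intro Max_ge) auto

lemma max_cardinal_USW_le:
  assumes "cardinal_allocations n m k \<noteq> {}"
    and "\<And>a. a \<in> cardinal_allocations n m k \<Longrightarrow> USW n m u a \<le> B"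
  shows "max_cardinal_USW n m k u \<le> B"
  unfolding max_cardinal_USW_def using assms finite_cardinal_allocations by (subst Max_le_iff) auto

lemma card_bundle_of_le_1:
  assumes "inj_on a {0..<m}"
  shows "card (bundle_of m a i) \<le> 1"
  using assms by (auto simp: card_le_Suc0_iff_eq bundle_of_def inj_on_def)

lemma inj_allocation_in_cardinal_allocations:
  assumes "a \<in> allocations n m" "inj_on a {0..<m}" "1 \<le> k"
  shows "a \<in> cardinal_allocations n m k"
  using assms(1,3) order_trans[OF card_bundle_of_le_1[OF assms(2)]]
  by (auto simp: cardinal_allocations_def)

lemma util_le_card_mult:
  assumes "\<And>g. g \<in> S \<Longrightarrow> u i g \<le> b"
  shows "util u i S \<le> real (card S) * b"
  unfolding util_def using sum_mono[of S "u i" "\<lambda>_. b"] assms by simp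

lemma sum_util_single_minded_le_1:
  assumes "a \<in> allocations n m" "g\<^sub>0 < m" "finite J"
    and "\<And>i g. i \<in> J \<Longrightarrow> u i g = (if g = g\<^sub>0 then 1 else 0)"
  shows "(\<Sum>i\<in>J. util u i (bundle_of m a i)) \<le> 1"
proof -
  have "util u i (bundle_of m a i) = (if i = a g\<^sub>0 then 1 else 0)" if "i \<in> J" for i
  proof -
    have "util u i (bundle_of m a i) = (\<Sum>g\<in>bundle_of m a i. if g = g\<^sub>0 then 1 else 0)"
      unfolding util_def using that assms(4) by simp
    also have "\<dots> = (if i = a g\<^sub>0 then 1 else 0)"
      using assms(2) by (auto simp: bundle_of_def)
    finally show ?thesis .
  qed
  then have "(\<Sum>i\<in>J. util u i (bundle_of m a i)) = (\<Sum>i\<in>J. if i = a g\<^sub>0 then 1 else 0)"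
    by simp
  also have "\<dots> \<le> 1" using assms(3) by simp
  finally show ?thesis .
qed

definition block_utility :: "nat \<Rightarrow> nat \<Rightarrow> nat \<Rightarrow> nat \<Rightarrow> real" where
  "block_utility s d i g =
     (if i < d then (if g \<in> {i*s<..i*s+s} then 1 / real s else 0)
      else (if g = 0 then 1 else 0))"

lemma block_subset_lessThan:
  fixes i d s :: nat
  assumes "i < d"
  shows "{i*s<..i*s+s} \<subseteq> {..<s*d+1}"
proof -
  have "i*s + s = Suc i * s" by simp
  also have "\<dots> \<le> d * s" using assms by (intro mult_le_mono1) simp
  finally have "i*s + s \<le> s*d" by (simp add: mult.commute)
  then show ?thesis by auto
qed

lemma util_block:
  assumes "0 < s" "i < d"
  shows "util (block_utility s d) i {i*s<..i*s+s} = 1"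
  using assms by (simp add: util_def block_utility_def)

lemma valid_block_instance:
  assumes "0 < s" "m = s*d+1"
  shows "valid_instance n m (block_utility s d)"
  unfolding valid_instance_def
proof (intro allI impI conjI)
  fix i g show "0 \<le> block_utility s d i g" by (simp add: block_utility_def)
next
  fix i
  show "(\<Sum>g<m. block_utility s d i g) = 1"
  proof (cases "i < d")
    case True
    have block: "{i*s<..i*s+s} \<subseteq> {..<m}" using block_subset_lessThan[OF True] assms(2) by simp
    have "(\<Sum>g<m. block_utility s d i g) = (\<Sum>g<m. if g \<in> {i*s<..i*s+s} then 1 / real s else 0)"
      using True by (simp add: block_utility_def)
    also have "\<dots> = (\<Sum>g\<in>{..<m} \<inter> {i*s<..i*s+s}. 1 / real s)"
      by (simp only: sum.inter_restrict[OF finite_lessThan])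
    also have "\<dots> = (\<Sum>g\<in>{i*s<..i*s+s}. 1 / real s)"
      by (simp only: Int_absorb1[OF block])
    also have "\<dots> = 1" using assms(1) by simp
    finally show ?thesis .
  next
    case False
    moreover have "0 < m" using assms(2) by simp
    ultimately show ?thesis by (simp add: block_utility_def)
  qed
qed

lemma div_eq_iff_mult_le_less:
  fixes x s i :: nat
  assumes "0 < s"
  shows "x div s = i \<longleftrightarrow> i * s \<le> x \<and> x < i * s + s"
proof
  assume "x div s = i"
  moreover have "x div s * s \<le> x" by simp
  moreover have "x < x div s * s + s"
    using div_mult_mod_eq[of x s] mod_less_divisor[OF assms, of x] by linarith
  ultimately show "i * s \<le> x \<and> x < i * s + s" by simp
next
  assume "i * s \<le> x \<and> x < i * s + s"
  then show "x div s = i" by (intro div_nat_eqI) (auto simp: mult.commute)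
qed

lemma pred_div_eq_iff_in_block:
  fixes g s i :: nat
  assumes "0 < s" "0 < g"
  shows "(g - 1) div s = i \<longleftrightarrow> g \<in> {i*s<..i*s+s}"
  using assms by (auto simp: div_eq_iff_mult_le_less)

lemma OPT_USW_block_ge:
  assumes "0 < s" "m = s*d+1" "d < n"
  shows "real d + 1 \<le> OPT_USW n m (block_utility s d)"
proof -
  define a where "a = (\<lambda>g\<in>{0..<m}. if g = 0 then d else (g - 1) div s)"
  have block_index: "(g - 1) div s < d" if "0 < g" "g < m" for g
    using that assms by (simp add: div_less_iff_less_mult mult.commute less_diff_conv2)
  have a: "a \<in> allocations n m"
  proof -
    have "(g - 1) div s < n" if "0 < g" "g < m" for g
      using block_index[OF that] assms(3) by linarith
    then show ?thesis using assms(3) by (auto simp: allocations_def a_def)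
  qed
  have "bundle_of m a i = {i*s<..i*s+s}" if "i < d" for i
    using that assms pred_div_eq_iff_in_block[OF assms(1)] block_subset_lessThan[OF that]
    by (auto simp: bundle_of_def a_def)
  then have "(\<Sum>i<d. util (block_utility s d) i (bundle_of m a i)) = real d"
    using util_block[OF assms(1)] by simp
  moreover have "bundle_of m a d = {0}"
    using block_index assms(2) by (auto simp: bundle_of_def a_def)
  then have "util (block_utility s d) d (bundle_of m a d) = 1"
    by (simp add: util_def block_utility_def)
  ultimately have "real d + 1 = (\<Sum>i<Suc d. util (block_utility s d) i (bundle_of m a i))"
    by simp
  also have "\<dots> \<le> USW n m (block_utility s d) a"
    unfolding USW_def util_def using assms(3)
    by (intro sum_mono2) (auto simp: block_utility_def intro!: sum_nonneg)
  also have "\<dots> \<le> OPT_USW n m (block_utility s d)"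
    using a by (rule USW_le_OPT_USW)
  finally show ?thesis .
qed

lemma shifted_identity_in_cardinal_allocations:
  assumes "1 \<le> k" "d + m \<le> n"
  shows "(\<lambda>g\<in>{0..<m}. d + g) \<in> cardinal_allocations n m k"
  using assms by (intro inj_allocation_in_cardinal_allocations) (auto simp: allocations_def inj_on_def)

lemma max_cardinal_USW_block_ge:
  assumes "1 \<le> k" "m = s*d+1" "d + m \<le> n"
  shows "1 \<le> max_cardinal_USW n m k (block_utility s d)"
proof -
  define a where "a = (\<lambda>g\<in>{0..<m}. d + g)"
  have "bundle_of m a d = {0}"
    using assms(2) by (auto simp: bundle_of_def a_def)
  then have "1 = util (block_utility s d) d (bundle_of m a d)"
    by (simp add: util_def block_utility_def)
  also have "\<dots> \<le> USW n m (block_utility s d) a"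
    unfolding USW_def util_def using assms(2,3)
    by (intro member_le_sum) (auto simp: block_utility_def intro!: sum_nonneg)
  also have "\<dots> \<le> max_cardinal_USW n m k (block_utility s d)"
    using shifted_identity_in_cardinal_allocations[OF assms(1,3)] unfolding a_def by (rule USW_le_max_cardinal_USW)
  finally show ?thesis .
qed

lemma USW_block_cardinal_le:
  assumes "m = s*d+1" "d \<le> n" "a \<in> cardinal_allocations n m k"
  shows "USW n m (block_utility s d) a \<le> real d * real k / real s + 1"
proof -
  let ?v = "\<lambda>i. util (block_utility s d) i (bundle_of m a i)"
  have agents: "{..<n} = {..<d} \<union> {d..<n}" using assms(2) by auto
  have "USW n m (block_utility s d) a = (\<Sum>i<d. ?v i) + (\<Sum>i\<in>{d..<n}. ?v i)"
    unfolding USW_def agents by (subst sum.union_disjoint) auto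
  moreover have "?v i \<le> real k / real s" if "i < d" for i
  proof -
    have "?v i \<le> real (card (bundle_of m a i)) * (1 / real s)"
      using that by (intro util_le_card_mult) (simp add: block_utility_def)
    also have "\<dots> \<le> real k / real s"
      using assms that by (simp add: cardinal_allocations_def divide_right_mono)
    finally show ?thesis .
  qed
  then have "(\<Sum>i<d. ?v i) \<le> real d * real k / real s"
    using sum_mono[of "{..<d}" ?v "\<lambda>_. real k / real s"] by simp
  moreover have "(\<Sum>i\<in>{d..<n}. ?v i) \<le> 1"
    using assms by (intro sum_util_single_minded_le_1[where g\<^sub>0 = 0])
      (auto simp: cardinal_allocations_def block_utility_def)
  ultimately show ?thesis by simp
qed

lemma max_cardinal_USW_block_le:
  assumes "1 \<le> k" "m = s*d+1" "d + m \<le> n"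
  shows "max_cardinal_USW n m k (block_utility s d) \<le> real d * real k / real s + 1"
  using shifted_identity_in_cardinal_allocations[OF assms(1,3)] USW_block_cardinal_le[OF assms(2)] assms(3)
  by (intro max_cardinal_USW_le) auto

lemma OPT_USW_div_max_cardinal_USW_block_ge:
  assumes "1 \<le> k" "0 < s" "m = s*d+1"
  shows "(real d + 1) / (real d * real k / real s + 1)
           \<le> OPT_USW (d + m) m (block_utility s d) / max_cardinal_USW (d + m) m k (block_utility s d)"
proof (rule frac_le)
  show "real d + 1 \<le> OPT_USW (d + m) m (block_utility s d)"
    using OPT_USW_block_ge[OF assms(2,3)] assms(3) by simp
  then show "0 \<le> OPT_USW (d + m) m (block_utility s d)" by linarith
  show "0 < max_cardinal_USW (d + m) m k (block_utility s d)"
    using max_cardinal_USW_block_ge[OF assms(1,3)] by fastforce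
  show "max_cardinal_USW (d + m) m k (block_utility s d) \<le> real d * real k / real s + 1"
    using max_cardinal_USW_block_le[OF assms(1,3)] by simp
qed

theorem lemma1:
  fixes k c m :: nat
  assumes "k \<ge> 1" and "c \<ge> 2" and "m = k * (c^2 - 1) + 1"
  shows "\<exists>n u. valid_instance n m u \<and> k * n \<ge> m \<and>
           OPT_USW n m u / max_cardinal_USW n m k u
             \<ge> (1 / 2) * (1 + sqrt (1 + real (m - 1) / real k))"
proof -
  define s where "s = k * (c + 1)"
  define d where "d = c - 1"
  have "0 < s" using assms(1) by (simp add: s_def)
  have "c^2 - 1 = (c + 1) * (c - 1)" by (simp add: power2_eq_square algebra_simps)
  then have m: "m = s * d + 1" using assms(3) unfolding s_def d_def by (simp only: mult.assoc)
  have "real (m - 1) = real k * (real c ^ 2 - 1)"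
    using assms(2,3) by (simp add: of_nat_diff)
  then have sqrt_eq: "sqrt (1 + real (m - 1) / real k) = real c"
    using assms(1) by simp
  have d: "real d = real c - 1" using assms(2) by (simp add: d_def of_nat_diff)
  have "real s = real k * (real c + 1)" by (simp add: s_def algebra_simps)
  then have frac: "real d * real k / real s = (real c - 1) / (real c + 1)"
    using assms(1) d by simp
  have "(real d + 1) / (real d * real k / real s + 1) = real c / ((real c - 1) / (real c + 1) + 1)"
    unfolding frac using d by simp
  also have "\<dots> = (1 / 2) * (1 + real c)"
    using assms(2) by (simp add: field_simps)
  finally have ratio_eq: "(real d + 1) / (real d * real k / real s + 1) = (1 / 2) * (1 + real c)" .
  have "m \<le> 1 * (d + m)" by simp
  also have "\<dots> \<le> k * (d + m)" using assms(1) by (rule mult_le_mono1)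
  finally have "m \<le> k * (d + m)" .
  then show ?thesis
    using valid_block_instance[OF \<open>0 < s\<close> m]
      OPT_USW_div_max_cardinal_USW_block_ge[OF assms(1) \<open>0 < s\<close> m]
    unfolding sqrt_eq ratio_eq by blast
qed

end
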